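(* Let a countable group $G$ act continuously on a Polish space $X$, let $\Phi=(\ell,\phi,\mathcal{Z},\Gamma,\mathcal{H})$ be a chart for $G$, and let $E$ be an equivalence relation on $X$. If $X^{\mathcal{H}}$ is clopen and $E$ is $G$-clopen, then $\partial_i^\Phi(E,A)$ is clopen for every centered rectangle $A\subseteq\mathrm{dom}(\phi)$ and every $1\le i\le\ell$.
   Context: Rectangles: Let $\Gamma$ be a finite additive abelian group with identity $0_\Gamma$ and $\ell\in\mathbb{N}$. Elements of $\mathbb{Z}^\ell\times\Gamma$ have integer coordinates $v_1,\dots,v_\ell$ and $v_{\ell+1}\in\Gamma$; $\mathbf{0}$ has first $\ell$ coordinates $0$ and last coordinate $0_\Gamma$; $e_i$ has $i$-th coordinate $1$, other integer coordinates $0$, last coordinate $0_\Gamma$; for $\lambda$ real, $\lambda\cdot v$ scales the first $\ell$ coordinates. $\mathrm{Rec}(a)=\{b\in\mathbb{Z}^\ell\times\Gamma: -|a_i|\le b_i\le|a_i|,\ 1\le i\le\ell\}$. A rectangle is $c+\mathrm{Rec}(a)$, $c,a\in\mathbb{Z}^\ell\times\Gamma$; uniquely written with center $c\in\mathbb{Z}^\ell\times\{0_\Gamma\}$ and radius vector $\mathrm{L}(A)=a\in\mathbb{N}^\ell\times\{0_\Gamma\}$, entries $\mathrm{L}_i(A)$. Centered means center $\mathbf{0}$. $A^i=c+\mathrm{Rec}(\mathrm{L}(A)-\mathrm{L}_i(A)\cdot e_i)$ where $c$ is the center of $A$. Sums are elementwise. $\lambda\cdot A=c+\mathrm{Rec}(\lambda\cdot\mathrm{L}(A))$.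 Charts: a chart for $G$ is $\Phi=(\ell,\phi,\mathcal{Z},\Gamma,\mathcal{H})$ with $\mathcal{H}$ a finite collection of pairwise conjugate subgroups of $G$, $\Gamma$ finite abelian, $\mathcal{Z}$ a centered rectangle with all $\mathrm{L}_i(\mathcal{Z})>0$, $\phi$ an injective map into $G$ with $\mathrm{dom}(\phi)$ a centered rectangle containing $3\cdot\mathcal{Z}$, $\phi(\mathbf{0})=1_G$, and for all $r,s\in\mathrm{dom}(\phi)$, $H\in\mathcal{H}$: $\phi(r)H=\phi(s)H\Rightarrow r=s$; $r+s+\mathcal{Z}\subseteq\mathrm{dom}(\phi)\Rightarrow\exists z\in\mathcal{Z}:\phi(r)\phi(s)H=\phi(r+s+z)H$; $r-s+\mathcal{Z}\subseteq\mathrm{dom}(\phi)\Rightarrow\exists z:\phi(r)\phi(s)^{-1}H=\phi(r-s+z)H$; $-r+s+\mathcal{Z}\subseteq\mathrm{dom}(\phi)\Rightarrow\exists z:\phi(r)^{-1}\phi(s)H=\phi(-r+s+z)H$; $-s+\mathcal{Z}\subseteq\mathrm{dom}(\phi)\Rightarrow\exists z:\phi(s)^{-1}H=\phi(-s+z)H$. $\phi(S)\cdot x=\{\phi(s)\cdot x: s\in S\}$; $X^{\mathcal{H}}=\{x\in X:\mathrm{Stab}(x)\in\mathcal{H}\}$. Boundary: for $E$ an equivalence relation on $X$, $A\subseteq\mathrm{dom}(\phi)$ centered and $1\le i\le\ell$, $\partial_i^\Phi(E,A)$ is the set of $x\in X^{\mathcal{H}}$ with $[\phi(A^i-\mathrm{L}_i(A)\cdot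 e_i)\cdot x]_E\cap[\phi(A^i+\mathrm{L}_i(A)\cdot e_i)\cdot x]_E=\varnothing$, where $[Y]_E$ is the $E$-saturation of $Y$. $G$-clopen: a relation $R\subseteq X\times X$ is $G$-clopen if for each $g\in G$ the set $\{x:(x,g\cdot x)\in R\}$ is clopen. *)

theory Defs
  imports "HOL-Analysis.Analysis" "HOL-Algebra.Group" "HOL-Algebra.Coset"
begin

(* Elements of Z^l x Gamma: integer coordinates 1..l (all other coordinates 0)
   and a last coordinate in the finite abelian group Gamma (a type 'c). *)
type_synonym 'c zvec = "(nat \<Rightarrow> int) \<times> 'c"

definition Zsp :: "nat \<Rightarrow> ('c::ab_group_add) zvec set" where
  "Zsp l = {v. \<forall>i. (i < 1 \<or> l < i) \<longrightarrow> fst v i = 0}"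

definition vzero :: "('c::ab_group_add) zvec" where
  "vzero = ((\<lambda>_. 0), 0)"

definition vadd :: "('c::ab_group_add) zvec \<Rightarrow> 'c zvec \<Rightarrow> 'c zvec" where
  "vadd v w = ((\<lambda>i. fst v i + fst w i), snd v + snd w)"

definition vneg :: "('c::ab_group_add) zvec \<Rightarrow> 'c zvec" where
  "vneg v = ((\<lambda>i. - fst v i), - snd v)"

definition unitv :: "nat \<Rightarrow> ('c::ab_group_add) zvec" where
  "unitv i = ((\<lambda>j. if j = i then 1 else 0), 0)"

definition vscale :: "int \<Rightarrow> ('c::ab_group_add) zvec \<Rightarrow> 'c zvec" where
  "vscale k v = ((\<lambda>i. k * fst v i), snd v)"

definition Rec :: "nat \<Rightarrow> ('c::ab_group_add) zvec \<Rightarrow> 'c zvec set" where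
  "Rec l a = {b \<in> Zsp l. \<forall>i\<in>{1..l}. - \<bar>fst a i\<bar> \<le> fst b i \<and> fst b i \<le> \<bar>fst a i\<bar>}"

definition vtrans :: "('c::ab_group_add) zvec \<Rightarrow> 'c zvec set \<Rightarrow> 'c zvec set" where
  "vtrans c S = vadd c ` S"

(* A is a centered rectangle with radius vector L(A) = a
   (a in N^l x {0_Gamma}, center 0); this is the unique such writing. *)
definition centered_rect :: "nat \<Rightarrow> ('c::ab_group_add) zvec \<Rightarrow> 'c zvec set \<Rightarrow> bool" where
  "centered_rect l a A \<longleftrightarrow> a \<in> Zsp l \<and> snd a = 0 \<and> (\<forall>i. 0 \<le> fst a i) \<and> A = Rec l a"

definition rect_face :: "nat \<Rightarrow> ('c::ab_group_add) zvec \<Rightarrow> nat \<Rightarrow> 'c zvec set" where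
  "rect_face l a i = Rec l (vadd a (vneg (vscale (fst a i) (unitv i))))"

definition Stab :: "('g, 'm) monoid_scheme \<Rightarrow> ('g \<Rightarrow> 'x \<Rightarrow> 'x) \<Rightarrow> 'x \<Rightarrow> 'g set" where
  "Stab G act x = {g \<in> carrier G. act g x = x}"

definition XH :: "('g, 'm) monoid_scheme \<Rightarrow> ('g \<Rightarrow> 'x \<Rightarrow> 'x) \<Rightarrow> 'g set set \<Rightarrow> 'x set" where
  "XH G act \<H> = {x. Stab G act x \<in> \<H>}"

definition continuous_action :: "('g, 'm) monoid_scheme \<Rightarrow> ('g \<Rightarrow> 'x::topological_space \<Rightarrow> 'x) \<Rightarrow> bool" where
  "continuous_action G act \<longleftrightarrow> group G
     \<and> (\<forall>x. act \<one>\<^bsub>G\<^esub> x = x)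
     \<and> (\<forall>g\<in>carrier G. \<forall>h\<in>carrier G. \<forall>x. act (g \<otimes>\<^bsub>G\<^esub> h) x = act g (act h x))
     \<and> (\<forall>g\<in>carrier G. continuous_on UNIV (act g))"

(* Chart Phi = (l, phi, Z, Gamma, H) for G, where dom(phi) = D.
   Gamma is the type 'c. *)
definition is_chart ::
  "('g, 'm) monoid_scheme \<Rightarrow> nat \<Rightarrow> (('c::{finite, ab_group_add}) zvec \<Rightarrow> 'g) \<Rightarrow> 'c zvec set
     \<Rightarrow> 'c zvec set \<Rightarrow> 'g set set \<Rightarrow> bool" where
  "is_chart G l \<phi> D Z \<H> \<longleftrightarrow>
     finite \<H>
   \<and> (\<forall>H\<in>\<H>. subgroup H G)
   \<and> (\<forall>H\<in>\<H>. \<forall>K\<in>\<H>. \<exists>g\<in>carrier G. K = (g <#\<^bsub>G\<^esub> H) #>\<^bsub>G\<^esub> inv\<^bsub>G\<^esub> g)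
   \<and> (\<exists>z. centered_rect l z Z \<and> (\<forall>i\<in>{1..l}. 0 < fst z i)
        \<and> (\<exists>d. centered_rect l d D) \<and> Rec l (vscale 3 z) \<subseteq> D)
   \<and> inj_on \<phi> D \<and> \<phi> ` D \<subseteq> carrier G
   \<and> \<phi> vzero = \<one>\<^bsub>G\<^esub>
   \<and> (\<forall>r\<in>D. \<forall>s\<in>D. \<forall>H\<in>\<H>.
        (\<phi> r <#\<^bsub>G\<^esub> H = \<phi> s <#\<^bsub>G\<^esub> H \<longrightarrow> r = s)
      \<and> (vtrans (vadd r s) Z \<subseteq> D \<longrightarrow>
           (\<exists>z\<in>Z. (\<phi> r \<otimes>\<^bsub>G\<^esub> \<phi> s) <#\<^bsub>G\<^esub> H = \<phi> (vadd (vadd r s) z) <#\<^bsub>G\<^esub> H))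
      \<and> (vtrans (vadd r (vneg s)) Z \<subseteq> D \<longrightarrow>
           (\<exists>z\<in>Z. (\<phi> r \<otimes>\<^bsub>G\<^esub> inv\<^bsub>G\<^esub> \<phi> s) <#\<^bsub>G\<^esub> H
                   = \<phi> (vadd (vadd r (vneg s)) z) <#\<^bsub>G\<^esub> H))
      \<and> (vtrans (vadd (vneg r) s) Z \<subseteq> D \<longrightarrow>
           (\<exists>z\<in>Z. (inv\<^bsub>G\<^esub> \<phi> r \<otimes>\<^bsub>G\<^esub> \<phi> s) <#\<^bsub>G\<^esub> H
                   = \<phi> (vadd (vadd (vneg r) s) z) <#\<^bsub>G\<^esub> H))
      \<and> (vtrans (vneg s) Z \<subseteq> D \<longrightarrow>
           (\<exists>z\<in>Z. (inv\<^bsub>G\<^esub> \<phi> s) <#\<^bsub>G\<^esub> H = \<phi> (vadd (vneg s) z) <#\<^bsub>G\<^esub> H)))"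

definition act_img :: "('g \<Rightarrow> 'x \<Rightarrow> 'x) \<Rightarrow> ('c zvec \<Rightarrow> 'g) \<Rightarrow> 'c zvec set \<Rightarrow> 'x \<Rightarrow> 'x set" where
  "act_img act \<phi> S x = {act (\<phi> s) x | s. s \<in> S}"

definition boundary ::
  "('g, 'm) monoid_scheme \<Rightarrow> ('g \<Rightarrow> 'x \<Rightarrow> 'x) \<Rightarrow> nat \<Rightarrow> (('c::ab_group_add) zvec \<Rightarrow> 'g)
     \<Rightarrow> 'g set set \<Rightarrow> ('x \<times> 'x) set \<Rightarrow> 'c zvec \<Rightarrow> nat \<Rightarrow> 'x set" where
  "boundary G act l \<phi> \<H> E a i =
     {x \<in> XH G act \<H>.
        E `` act_img act \<phi> (vtrans (vneg (vscale (fst a i) (unitv i))) (rect_face l a i)) x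
      \<inter> E `` act_img act \<phi> (vtrans (vscale (fst a i) (unitv i)) (rect_face l a i)) x = {}}"

definition G_clopen :: "('g, 'm) monoid_scheme \<Rightarrow> ('g \<Rightarrow> 'x::topological_space \<Rightarrow> 'x) \<Rightarrow> ('x \<times> 'x) set \<Rightarrow> bool" where
  "G_clopen G act R \<longleftrightarrow> (\<forall>g\<in>carrier G. open {x. (x, act g x) \<in> R} \<and> closed {x. (x, act g x) \<in> R})"

end

theory Submission
  imports Defs
begin

text \<open>
  The two shifted faces \<open>A\<^sup>i \<plusminus> L\<^sub>i(A)\<cdot>e\<^sub>i\<close> are finite subsets of \<open>A \<subseteq> dom(\<phi>)\<close>,
  and since \<open>E\<close> is an equivalence relation the two saturations are disjoint iff no point of
  \<open>\<phi>(A\<^sup>i - L\<^sub>i(A)\<cdot>e\<^sub>i)\<cdot>x\<close> is \<open>E\<close>-related to a point of \<open>\<phi>(A\<^sup>i + L\<^sub>i(A)\<cdot>e\<^sub>i)\<cdot>x\<close>. For fixed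
  \<open>g, h \<in> G\<close> the set \<open>{x. g\<cdot>x E h\<cdot>x}\<close> is the preimage of \<open>{y. y E (h g\<^sup>-\<^sup>1)\<cdot>y}\<close> under the
  continuous map \<open>g\<cdot>\<close>, hence clopen. So the boundary is \<open>X\<^sup>\<H>\<close> intersected with finitely many
  clopen sets.
\<close>

definition shifted_face :: "nat \<Rightarrow> ('c::ab_group_add) zvec \<Rightarrow> nat \<Rightarrow> int \<Rightarrow> 'c zvec set" where
  "shifted_face l a i k = vtrans (vscale k (unitv i)) (rect_face l a i)"

lemma vneg_vscale_unitv: "vneg (vscale k (unitv i)) = vscale (- k) (unitv i)"
  unfolding vneg_def vscale_def unitv_def by simp

lemma boundary_shifted_face:
  "boundary G act l \<phi> \<H> E a i =
     {x \<in> XH G act \<H>.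
        E `` act_img act \<phi> (shifted_face l a i (- fst a i)) x
      \<inter> E `` act_img act \<phi> (shifted_face l a i (fst a i)) x = {}}"
  unfolding boundary_def shifted_face_def vneg_vscale_unitv ..

lemma Zsp_restrict_eqD:
  assumes "v \<in> Zsp l" "w \<in> Zsp l" "restrict (fst v) {1..l} = restrict (fst w) {1..l}"
  shows "fst v = fst w"
proof
  fix j show "fst v j = fst w j"
  proof (cases "j \<in> {1..l}")
    case True
    then show ?thesis using fun_cong[OF assms(3), of j] by simp
  next
    case False
    then have "j < 1 \<or> l < j" by auto
    then show ?thesis using assms(1,2) unfolding Zsp_def mem_Collect_eq by metis
  qed
qed

lemma finite_Rec: "finite (Rec l (b::('c::{finite, ab_group_add}) zvec))"
proof -
  let ?code = "\<lambda>v::'c zvec. (restrict (fst v) {1..l}, snd v)"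
  have "inj_on ?code (Rec l b)"
    by (rule inj_onI) (auto simp: Rec_def prod_eq_iff intro: Zsp_restrict_eqD)
  moreover have "?code ` Rec l b \<subseteq> (\<Pi>\<^sub>E j\<in>{1..l}. {- \<bar>fst b j\<bar>..\<bar>fst b j\<bar>}) \<times> UNIV"
    unfolding Rec_def by auto
  then have "finite (?code ` Rec l b)"
    by (rule finite_subset) (simp add: finite_PiE)
  ultimately show ?thesis using finite_imageD by blast
qed

lemma finite_shifted_face: "finite (shifted_face l (a::('c::{finite, ab_group_add}) zvec) i k)"
  unfolding shifted_face_def vtrans_def rect_face_def by (intro finite_imageI finite_Rec)

lemma shifted_face_subset_rect:
  assumes "centered_rect l a A" "i \<in> {1..l}" "\<bar>k\<bar> \<le> fst a i"
  shows "shifted_face l a i k \<subseteq> A"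
proof
  fix v assume "v \<in> shifted_face l a i k"
  then obtain b where b: "b \<in> Rec l (vadd a (vneg (vscale (fst a i) (unitv i))))"
    and v: "v = vadd (vscale k (unitv i)) b"
    unfolding shifted_face_def vtrans_def rect_face_def by auto
  have A: "A = Rec l a" "\<forall>j. 0 \<le> fst a j"
    using assms(1) unfolding centered_rect_def by auto
  have "b \<in> Zsp l" and b_bounds: "\<forall>j\<in>{1..l}. - \<bar>fst a j - (if j = i then fst a i else 0)\<bar> \<le> fst b j
      \<and> fst b j \<le> \<bar>fst a j - (if j = i then fst a i else 0)\<bar>"
    using b unfolding Rec_def vadd_def vneg_def vscale_def unitv_def by auto
  then have "v \<in> Zsp l"
    using assms(2) unfolding v Zsp_def vadd_def vscale_def unitv_def by auto
  moreover have "- \<bar>fst a j\<bar> \<le> fst v j \<and> fst v j \<le> \<bar>fst a j\<bar>" if "j \<in> {1..l}" for j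
    using b_bounds[rule_format, OF that] assms(3) A(2)
    unfolding v vadd_def vscale_def unitv_def by (cases "j = i") (auto simp: abs_le_iff)
  ultimately show "v \<in> A" unfolding A(1) Rec_def by auto
qed

lemma G_clopen_pair:
  assumes act: "continuous_action G act" and E: "G_clopen G act E"
    and g: "g \<in> carrier G" and h: "h \<in> carrier G"
  shows "open {x. (act g x, act h x) \<in> E} \<and> closed {x. (act g x, act h x) \<in> E}"
proof -
  interpret group G using act unfolding continuous_action_def by blast
  let ?k = "h \<otimes>\<^bsub>G\<^esub> inv\<^bsub>G\<^esub> g"
  have k: "?k \<in> carrier G" using g h by simp
  have "act ?k (act g x) = act h x" for x
  proof -
    have "act ?k (act g x) = act (?k \<otimes>\<^bsub>G\<^esub> g) x"
      using act k g unfolding continuous_action_def by metis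
    also have "?k \<otimes>\<^bsub>G\<^esub> g = h" using g h by (simp add: m_assoc)
    finally show ?thesis .
  qed
  then have preimage: "{x. (act g x, act h x) \<in> E} = act g -` {y. (y, act ?k y) \<in> E}"
    by auto
  have "continuous_on UNIV (act g)" using act g unfolding continuous_action_def by blast
  moreover have "open {y. (y, act ?k y) \<in> E}" "closed {y. (y, act ?k y) \<in> E}"
    using E k unfolding G_clopen_def by auto
  ultimately show ?thesis unfolding preimage using open_vimage closed_vimage by blast
qed

lemma equiv_Image_Int_empty_iff:
  assumes "equiv UNIV E"
  shows "E `` P \<inter> E `` Q = {} \<longleftrightarrow> (\<forall>p\<in>P. \<forall>q\<in>Q. (p, q) \<notin> E)"
proof
  assume disjoint: "E `` P \<inter> E `` Q = {}"
  show "\<forall>p\<in>P. \<forall>q\<in>Q. (p, q) \<notin> E"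
  proof (intro ballI notI)
    fix p q assume "p \<in> P" "q \<in> Q" "(p, q) \<in> E"
    moreover have "(q, q) \<in> E" using assms by (simp add: equiv_def refl_on_def)
    ultimately show False using disjoint by blast
  qed
next
  assume "\<forall>p\<in>P. \<forall>q\<in>Q. (p, q) \<notin> E"
  then show "E `` P \<inter> E `` Q = {}"
    using assms unfolding equiv_def by (blast dest: symD transD)
qed

theorem lemma6p2:
  fixes G :: "('g, 'm) monoid_scheme"
    and act :: "'g \<Rightarrow> 'x::polish_space \<Rightarrow> 'x"
    and l :: nat
    and \<phi> :: "('c::{finite, ab_group_add}) zvec \<Rightarrow> 'g"
    and D Z :: "'c zvec set"
    and \<H> :: "'g set set"
    and E :: "('x \<times> 'x) set"
    and A :: "'c zvec set" and a :: "'c zvec" and i :: nat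
  assumes "countable (carrier G)"
    and "continuous_action G act"
    and "is_chart G l \<phi> D Z \<H>"
    and "equiv UNIV E"
    and "open (XH G act \<H>)" and "closed (XH G act \<H>)"
    and "G_clopen G act E"
    and "centered_rect l a A" and "A \<subseteq> D"
    and "1 \<le> i" and "i \<le> l"
  shows "open (boundary G act l \<phi> \<H> E a i) \<and> closed (boundary G act l \<phi> \<H> E a i)"
proof -
  let ?P = "shifted_face l a i (- fst a i) \<times> shifted_face l a i (fst a i)"
  let ?C = "\<lambda>(s, t). {x. (act (\<phi> s) x, act (\<phi> t) x) \<in> E}"
  have "0 \<le> fst a i" using assms(8) unfolding centered_rect_def by blast
  then have "shifted_face l a i k \<subseteq> A" if "k = fst a i \<or> k = - fst a i" for k
    using shifted_face_subset_rect[OF assms(8), of i k] assms(10,11) that by auto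
  then have P_dom: "?P \<subseteq> D \<times> D" using assms(9) by blast
  have \<phi>_dom: "\<phi> ` D \<subseteq> carrier G" using assms(3) unfolding is_chart_def by blast
  have clopen: "open (?C p) \<and> closed (?C p)" if "p \<in> ?P" for p
  proof -
    obtain s t where st: "p = (s, t)" by (cases p)
    then have "s \<in> D" "t \<in> D" using that P_dom by (meson SigmaD1 SigmaD2 subsetD)+
    then have "\<phi> s \<in> carrier G" "\<phi> t \<in> carrier G" using \<phi>_dom by (meson image_subset_iff)+
    then show ?thesis unfolding st by (simp add: G_clopen_pair[OF assms(2,7)])
  qed
  have "boundary G act l \<phi> \<H> E a i = XH G act \<H> \<inter> (\<Inter>p\<in>?P. - ?C p)"
    unfolding boundary_shifted_face equiv_Image_Int_empty_iff[OF assms(4)] act_img_def by blast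
  moreover have "finite ?P" by (simp add: finite_shifted_face)
  ultimately show ?thesis
    using assms(5,6) clopen by (auto intro!: open_Int open_INT closed_Int closed_INT)
qed

end
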